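(* Every sub-correlation matrix $\xi$ satisfies $\mathrm{Tr}[\xi\tau]\le1$ for all $\tau\in\mathsf P(S)$. Conversely, if $W\ge0$ satisfies $\mathrm{Tr}[W\tau]\le1$ for all $\tau\in\mathsf P(S)$, then $W/d$ is a sub-correlation matrix.
   Context: $S$ is a $d$-dimensional quantum system with non-degenerate Hamiltonian $H=\sum_i E_i|i\rangle\langle i|$, $E_1<\dots<E_d$; matrices are written in this eigenbasis. $\mathsf P(S)$ is the set of passive states, i.e. density matrices $\sum_i p_i|i\rangle\langle i|$ with $p_1\ge\dots\ge p_d$. A sub-correlation matrix is a positive semidefinite $d\times d$ matrix $\xi$ with $\xi_{ii}\le1$ for all $i$. *)

theory Defs
  imports "Jordan_Normal_Form.Matrix" "HOL-Library.Complex_Order"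
begin

text \<open>Matrices are d x d complex matrices, written in the energy eigenbasis
  |0>,...,|d-1> ordered by strictly increasing energy (indices shifted to start at 0).\<close>

definition psd_mat :: "nat \<Rightarrow> complex mat \<Rightarrow> bool" where
  "psd_mat d A \<longleftrightarrow> A \<in> carrier_mat d d
     \<and> (\<forall>i<d. \<forall>j<d. A $$ (i, j) = cnj (A $$ (j, i)))
     \<and> (\<forall>v :: nat \<Rightarrow> complex.
          0 \<le> (\<Sum>i<d. \<Sum>j<d. cnj (v i) * A $$ (i, j) * v j))"

definition sub_correlation_mat :: "nat \<Rightarrow> complex mat \<Rightarrow> bool" where
  "sub_correlation_mat d X \<longleftrightarrow> psd_mat d X \<and> (\<forall>i<d. X $$ (i, i) \<le> 1)"

definition passive_state :: "nat \<Rightarrow> complex mat \<Rightarrow> bool" where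
  "passive_state d \<tau> \<longleftrightarrow> (\<exists>p :: nat \<Rightarrow> real.
      (\<forall>i<d. 0 \<le> p i) \<and> (\<Sum>i<d. p i) = 1
      \<and> (\<forall>i j. i \<le> j \<longrightarrow> j < d \<longrightarrow> p j \<le> p i)
      \<and> \<tau> = mat d d (\<lambda>(i, j). if i = j then complex_of_real (p i) else 0))"

definition mat_trace :: "complex mat \<Rightarrow> complex" where
  "mat_trace A = (\<Sum>i<dim_row A. A $$ (i, i))"

end

theory Submission
  imports Defs
begin

text \<open>A passive state is a probability vector on the diagonal, so Tr[\<xi>\<tau>] is a convex
  combination of the diagonal entries of \<xi>, each at most 1. Conversely, testing W against the
  maximally mixed state, which is passive, gives Tr W \<le> d; since the diagonal of a positive
  semidefinite W is nonnegative, every diagonal entry is at most Tr W \<le> d.\<close>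

definition real_diag_mat :: "nat \<Rightarrow> (nat \<Rightarrow> real) \<Rightarrow> complex mat" where
  "real_diag_mat d p = mat d d (\<lambda>(i, j). if i = j then complex_of_real (p i) else 0)"

lemma passive_stateE:
  assumes "passive_state d \<tau>"
  obtains p where "\<And>i. i < d \<Longrightarrow> 0 \<le> p i" "(\<Sum>i<d. p i) = 1" "\<tau> = real_diag_mat d p"
  using assms unfolding passive_state_def real_diag_mat_def by blast

lemma passive_state_maximally_mixed:
  assumes "d \<ge> 1"
  shows "passive_state d (real_diag_mat d (\<lambda>_. 1 / real d))"
  unfolding passive_state_def real_diag_mat_def using assms by (intro exI[of _ "\<lambda>_. 1 / real d"]) auto

lemma index_mult_real_diag_mat:
  assumes "A \<in> carrier_mat n d" "i < n" "j < d"
  shows "(A * real_diag_mat d p) $$ (i, j) = A $$ (i, j) * complex_of_real (p j)"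
proof -
  have "(A * real_diag_mat d p) $$ (i, j)
      = (\<Sum>k=0..<d. A $$ (i, k) * (if k = j then complex_of_real (p k) else 0))"
    using assms by (simp add: real_diag_mat_def scalar_prod_def)
  then show ?thesis
    using assms(3) by (simp add: if_distrib[where f = "\<lambda>x. _ * x"] cong: if_cong)
qed

lemma mat_trace_mult_real_diag_mat:
  assumes "A \<in> carrier_mat d d"
  shows "mat_trace (A * real_diag_mat d p) = (\<Sum>i<d. A $$ (i, i) * complex_of_real (p i))"
  using assms unfolding mat_trace_def
  by (simp add: index_mult_real_diag_mat del: index_mult_mat(1))

lemma psd_mat_carrier: "psd_mat d A \<Longrightarrow> A \<in> carrier_mat d d"
  unfolding psd_mat_def by blast

lemma psd_mat_diag_nonneg:
  assumes "psd_mat d A" "i < d"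
  shows "0 \<le> A $$ (i, i)"
proof -
  define e where "e = (\<lambda>k::nat. if k = i then (1::complex) else 0)"
  have "(\<Sum>a<d. \<Sum>b<d. cnj (e a) * A $$ (a, b) * e b) = A $$ (i, i)"
    using assms(2)
    by (simp add: e_def if_distrib[where f = "\<lambda>x. _ * x"] if_distrib[where f = "\<lambda>x. x * _"]
        if_distrib[where f = cnj] cong: if_cong)
  moreover have "0 \<le> (\<Sum>a<d. \<Sum>b<d. cnj (e a) * A $$ (a, b) * e b)"
    using assms(1) unfolding psd_mat_def by blast
  ultimately show ?thesis by simp
qed

lemma psd_mat_smult:
  assumes "psd_mat d A" "0 \<le> c"
  shows "psd_mat d (c \<cdot>\<^sub>m A)"
proof -
  have A: "A \<in> carrier_mat d d" using assms(1) by (rule psd_mat_carrier)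
  have "cnj c = c"
    using assms(2) by (simp add: less_eq_complex_def complex_eq_iff)
  have hermitian: "(c \<cdot>\<^sub>m A) $$ (i, j) = cnj ((c \<cdot>\<^sub>m A) $$ (j, i))" if "i < d" "j < d" for i j
  proof -
    have "A $$ (i, j) = cnj (A $$ (j, i))"
      using assms(1) that unfolding psd_mat_def by blast
    then show ?thesis using A that \<open>cnj c = c\<close> by simp
  qed
  have nonneg: "0 \<le> (\<Sum>i<d. \<Sum>j<d. cnj (v i) * (c \<cdot>\<^sub>m A) $$ (i, j) * v j)" for v
  proof -
    have "0 \<le> (\<Sum>i<d. \<Sum>j<d. cnj (v i) * A $$ (i, j) * v j)"
      using assms(1) unfolding psd_mat_def by blast
    moreover have "(\<Sum>i<d. \<Sum>j<d. cnj (v i) * (c \<cdot>\<^sub>m A) $$ (i, j) * v j)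
        = c * (\<Sum>i<d. \<Sum>j<d. cnj (v i) * A $$ (i, j) * v j)"
      using A by (simp add: sum_distrib_left mult_ac)
    ultimately show ?thesis using assms(2) by simp
  qed
  show ?thesis
    unfolding psd_mat_def using smult_carrier_mat[OF A] hermitian nonneg by blast
qed

lemma convex_combination_le_one:
  fixes a :: "nat \<Rightarrow> complex"
  assumes "\<And>i. i < d \<Longrightarrow> a i \<le> 1" "\<And>i. i < d \<Longrightarrow> 0 \<le> p i" "(\<Sum>i<d. p i) = 1"
  shows "(\<Sum>i<d. a i * complex_of_real (p i)) \<le> 1"
proof -
  have "a i * complex_of_real (p i) \<le> complex_of_real (p i)" if "i < d" for i
    using mult_right_mono[OF assms(1)[OF that], of "complex_of_real (p i)"] assms(2)[OF that]
    by (simp add: less_eq_complex_def)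
  then have "(\<Sum>i<d. a i * complex_of_real (p i)) \<le> (\<Sum>i<d. complex_of_real (p i))"
    by (intro sum_mono) simp
  also have "\<dots> = 1"
    using assms(3) by (metis of_real_1 of_real_sum)
  finally show ?thesis .
qed

lemma sub_correlation_mat_trace_passive_le_one:
  assumes "sub_correlation_mat d \<xi>" "passive_state d \<tau>"
  shows "mat_trace (\<xi> * \<tau>) \<le> 1"
proof -
  obtain p :: "nat \<Rightarrow> real" where p: "\<And>i. i < d \<Longrightarrow> 0 \<le> p i" "(\<Sum>i<d. p i) = 1" "\<tau> = real_diag_mat d p"
    using passive_stateE[OF assms(2)] by blast
  have \<xi>: "\<xi> \<in> carrier_mat d d"
    using assms(1) unfolding sub_correlation_mat_def by (simp add: psd_mat_carrier)
  have diag: "\<And>i. i < d \<Longrightarrow> \<xi> $$ (i, i) \<le> 1"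
    using assms(1) unfolding sub_correlation_mat_def by simp
  have "mat_trace (\<xi> * \<tau>) = (\<Sum>i<d. \<xi> $$ (i, i) * complex_of_real (p i))"
    unfolding p(3) by (rule mat_trace_mult_real_diag_mat[OF \<xi>])
  also have "\<dots> \<le> 1"
    by (rule convex_combination_le_one[OF diag p(1,2)])
  finally show ?thesis .
qed

lemma trace_passive_bound_imp_sub_correlation_mat:
  assumes "d \<ge> 1" "psd_mat d W"
    and bound: "\<And>\<tau>. passive_state d \<tau> \<Longrightarrow> mat_trace (W * \<tau>) \<le> 1"
  shows "sub_correlation_mat d ((1 / of_nat d) \<cdot>\<^sub>m W)"
proof -
  have W: "W \<in> carrier_mat d d" using assms(2) by (rule psd_mat_carrier)
  let ?w = "\<lambda>i. W $$ (i, i) * complex_of_real (1 / real d)"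
  have "(\<Sum>i<d. ?w i) \<le> 1"
    using bound[OF passive_state_maximally_mixed[OF assms(1)]]
    by (simp add: mat_trace_mult_real_diag_mat[OF W])
  moreover have "?w i \<le> (\<Sum>k<d. ?w k)" if "i < d" for i
    using that psd_mat_diag_nonneg[OF assms(2)]
    by (intro member_le_sum mult_nonneg_nonneg) (auto simp: less_eq_complex_def)
  ultimately have "((1 / of_nat d) \<cdot>\<^sub>m W) $$ (i, i) \<le> 1" if "i < d" for i
    using that W by (auto simp: mult.commute intro: order_trans)
  moreover have "psd_mat d ((1 / of_nat d) \<cdot>\<^sub>m W)"
    using assms(2) by (rule psd_mat_smult) (simp add: less_eq_complex_def)
  ultimately show ?thesis unfolding sub_correlation_mat_def by blast
qed

theorem mainTheorem13:
  fixes d :: nat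
  assumes "d \<ge> 1"
  shows "(\<forall>\<xi>. sub_correlation_mat d \<xi> \<longrightarrow>
            (\<forall>\<tau>. passive_state d \<tau> \<longrightarrow> mat_trace (\<xi> * \<tau>) \<le> 1))
       \<and> (\<forall>W. psd_mat d W \<longrightarrow>
            (\<forall>\<tau>. passive_state d \<tau> \<longrightarrow> mat_trace (W * \<tau>) \<le> 1) \<longrightarrow>
            sub_correlation_mat d ((1 / of_nat d) \<cdot>\<^sub>m W))"
  using sub_correlation_mat_trace_passive_le_one trace_passive_bound_imp_sub_correlation_mat[OF assms]
  by blast

end
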